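(* Let $\mathbf{z}_1,\dots,\mathbf{z}_m\in\mathbb{R}_{>0}^n$ and $w_1,\dots,w_m\in\mathbb{R}_{>0}$ be such that $w_i=\ell(\mathbf{z}_i)$, $i=1,\dots,m$, for some function $\ell:\mathbb{R}_{>0}^n\to\mathbb{R}_{>0}$. Then for every $\tilde\varepsilon>0$ there exist a rational $T>0$ and two functions $\psi_T,\psi'_T\in\mathrm{GPOS}_T$ with rational parameters such that $$\left|\frac{w_i-\psi_T(\mathbf{z}_i)/\psi'_T(\mathbf{z}_i)}{\min\big(w_i,\psi_T(\mathbf{z}_i)/\psi'_T(\mathbf{z}_i)\big)}\right|\leqslant\tilde\varepsilon,\quad i=1,\dots,m.$$
   Context: A posynomial is a function $\psi:\mathbb{R}_{>0}^n\to\mathbb{R}_{>0}$, $\psi(\mathbf{x})=\sum_{k=1}^K c_k\mathbf{x}^{\boldsymbol{\alpha}^{(k)}}$, with $K$ a positive integer, $c_k>0$, $\boldsymbol{\alpha}^{(k)}\in\mathbb{R}^n$, and $\mathbf{x}^{\boldsymbol{\alpha}}=x_1^{\alpha_1}\cdots x_n^{\alpha_n}$. For $T>0$, $\mathrm{GPOS}_T$ is the class of functions $\psi_T(\mathbf{x})=(\psi(\mathbf{x}^{1/T}))^T$ with $\psi$ a posynomial (powers taken entrywise). $\psi_T\in\mathrm{GPOS}_T$ has rational parameters if it can be written so with $T$ rational, all entries of the $\boldsymbol{\alpha}^{(k)}$ rational, and all $\log c_k$ rational. *)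

theory Defs
  imports "HOL-Analysis.Analysis"
begin

definition pos_vec :: "real^'n \<Rightarrow> bool" where
  "pos_vec x \<longleftrightarrow> (\<forall>j. x $ j > 0)"

text \<open>A posynomial is represented by a nonempty list of terms (c_k, alpha^(k)) with c_k > 0;
  its value at x is the sum of c_k * x^alpha^(k).\<close>
definition monom_eval :: "real \<Rightarrow> real^'n \<Rightarrow> real^'n \<Rightarrow> real" where
  "monom_eval c \<alpha> x = c * (\<Prod>j\<in>UNIV. (x $ j) powr (\<alpha> $ j))"

definition posy_eval :: "(real \<times> (real^'n)) list \<Rightarrow> real^'n \<Rightarrow> real" where
  "posy_eval ps x = (\<Sum>(c, \<alpha>)\<leftarrow>ps. monom_eval c \<alpha> x)"

definition is_posy_rep :: "(real \<times> (real^'n)) list \<Rightarrow> bool" where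
  "is_posy_rep ps \<longleftrightarrow> ps \<noteq> [] \<and> (\<forall>(c, \<alpha>)\<in>set ps. c > 0)"

definition gpos_eval :: "real \<Rightarrow> (real \<times> (real^'n)) list \<Rightarrow> real^'n \<Rightarrow> real" where
  "gpos_eval T ps x = (posy_eval ps (\<chi> j. (x $ j) powr (1 / T))) powr T"

definition rational_gpos_rep :: "real \<Rightarrow> (real \<times> (real^'n)) list \<Rightarrow> bool" where
  "rational_gpos_rep T ps \<longleftrightarrow> T > 0 \<and> T \<in> \<rat> \<and> is_posy_rep ps \<and>
     (\<forall>(c, \<alpha>)\<in>set ps. ln c \<in> \<rat> \<and> (\<forall>j. \<alpha> $ j \<in> \<rat>))"

end

theory Submission
  imports Defs "HOL-Real_Asymp.Real_Asymp"
begin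

(* Already T = 1 works. In log coordinates u = ln x, the posynomial with terms
   c_q exp(-t |a_q|^2) x^(2 t a_q) equals exp(t |u|^2) * sum_q c_q exp(-t |u - a_q|^2), so the
   quotient of two such posynomials with the same centres a_q is a Gaussian-weighted average of
   the c_q. If the rational centres a_q are so close to the log data points that every data point
   is nearer to its own centre than to the centre of any other data point, then, as t grows, the
   average at the p-th point tends to c_p: only data points carrying a value different from c_p
   contribute to the error, and their weights decay exponentially relative to that of a_p.
   Taking c_q with rational logarithm close to w_q and t a large natural number, all parameters
   are rational; the relative error is then controlled by the absolute one. *)

lemma weighted_average_deviation_le:
  fixes c E :: "'i \<Rightarrow> real"
  assumes "finite I" "p \<in> I" "\<And>q. q \<in> I \<Longrightarrow> 0 < E q"
  shows "\<bar>(\<Sum>q\<in>I. c q * E q) / (\<Sum>q\<in>I. E q) - c p\<bar> \<le> (\<Sum>q\<in>I. \<bar>c q - c p\<bar> * (E q / E p))"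
proof -
  have Ep: "0 < E p" "E p \<le> (\<Sum>q\<in>I. E q)"
    using assms by (auto intro: member_le_sum less_imp_le)
  then have "\<bar>(\<Sum>q\<in>I. c q * E q) / (\<Sum>q\<in>I. E q) - c p\<bar> =
      \<bar>\<Sum>q\<in>I. (c q - c p) * E q\<bar> / (\<Sum>q\<in>I. E q)"
    by (simp add: field_simps sum_subtractf sum_distrib_left)
  also have "\<dots> \<le> (\<Sum>q\<in>I. \<bar>c q - c p\<bar> * E q) / (\<Sum>q\<in>I. E q)"
    using Ep assms(3)
    by (intro divide_right_mono order_trans[OF sum_abs] sum_mono) (auto simp: abs_mult abs_of_pos)
  also have "\<dots> \<le> (\<Sum>q\<in>I. \<bar>c q - c p\<bar> * E q) / E p"
    using Ep assms(3) by (intro divide_left_mono sum_nonneg) (auto intro!: mult_nonneg_nonneg simp: less_imp_le)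
  finally show ?thesis
    by (simp add: sum_divide_distrib)
qed

lemma softmin_average_tendsto:
  fixes c d :: "'i \<Rightarrow> real"
  assumes "finite I" "p \<in> I" "\<And>q. q \<in> I \<Longrightarrow> c q \<noteq> c p \<Longrightarrow> d p < d q"
  shows "((\<lambda>t. (\<Sum>q\<in>I. c q * exp (- t * d q)) / (\<Sum>q\<in>I. exp (- t * d q))) \<longlongrightarrow> c p) at_top"
proof (rule LIM_zero_cancel, rule Lim_null_comparison)
  show "\<forall>\<^sub>F t in at_top. norm ((\<Sum>q\<in>I. c q * exp (- t * d q)) / (\<Sum>q\<in>I. exp (- t * d q)) - c p)
      \<le> (\<Sum>q\<in>I. \<bar>c q - c p\<bar> * exp (- t * (d q - d p)))"
    using weighted_average_deviation_le[OF assms(1,2), of "\<lambda>q. exp (- _ * d q)" c]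
    by (simp add: exp_diff[symmetric] algebra_simps)
  have "((\<lambda>t. \<bar>c q - c p\<bar> * exp (- t * (d q - d p))) \<longlongrightarrow> 0) at_top" if "q \<in> I" for q
  proof (cases "c q = c p")
    case False
    then have "0 < d q - d p" using assms(3) that by simp
    then show ?thesis by real_asymp
  qed simp
  then show "((\<lambda>t. \<Sum>q\<in>I. \<bar>c q - c p\<bar> * exp (- t * (d q - d p))) \<longlongrightarrow> 0) at_top"
    by (rule tendsto_null_sum)
qed

lemma rational_vector_approx:
  fixes x :: "real^'n"
  assumes "0 < e"
  shows "\<exists>a. (\<forall>j. a $ j \<in> \<rat>) \<and> dist x a < e"
proof -
  have "\<exists>r\<in>\<rat>. \<bar>r - x $ j\<bar> < e / CARD('n)" for j
    using assms by (metis rational_approximation of_nat_0_less_iff zero_less_card_finite divide_pos_pos)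
  then obtain a where a: "\<And>j. a $ j \<in> \<rat>" "\<And>j. \<bar>a $ j - x $ j\<bar> < e / CARD('n)"
    by (metis vec_lambda_beta)
  have "dist x a \<le> (\<Sum>j\<in>UNIV. \<bar>(a - x) $ j\<bar>)"
    by (metis dist_commute dist_norm norm_le_l1_cart)
  also have "\<dots> < (\<Sum>j\<in>(UNIV::'n set). e / CARD('n))"
    using a(2) by (intro sum_strict_mono) auto
  also have "\<dots> = e"
    by simp
  finally show ?thesis
    using a(1) by blast
qed

lemma rational_separating_approx:
  fixes U :: "(real^'n) set"
  assumes "finite U"
  shows "\<exists>A. (\<forall>u j. A u $ j \<in> \<rat>) \<and> (\<forall>u\<in>U. \<forall>v\<in>U. u \<noteq> v \<longrightarrow> dist u (A u) < dist u (A v))"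
proof -
  have "\<forall>u\<in>U. \<exists>\<delta>>0. \<forall>v\<in>U. v \<noteq> u \<longrightarrow> \<delta> \<le> dist u v"
    using finite_set_avoid[OF assms] by blast
  then obtain \<delta> where \<delta>: "\<And>u. u \<in> U \<Longrightarrow> 0 < \<delta> u"
    "\<And>u v. u \<in> U \<Longrightarrow> v \<in> U \<Longrightarrow> v \<noteq> u \<Longrightarrow> \<delta> u \<le> dist u v"
    by metis
  define r where "r = Min (insert 1 (\<delta> ` U))"
  have r: "0 < r" "\<And>u. u \<in> U \<Longrightarrow> r \<le> \<delta> u"
    using assms \<delta>(1) by (auto simp: r_def)
  have "\<exists>a. (\<forall>j. a $ j \<in> \<rat>) \<and> dist u a < r / 2" for u :: "real^'n"
    using r(1) by (intro rational_vector_approx) simp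
  then obtain A :: "real^'n \<Rightarrow> real^'n" where A: "\<And>u j. A u $ j \<in> \<rat>" "\<And>u. dist u (A u) < r / 2"
    by metis
  have "dist u (A u) < dist u (A v)" if "u \<in> U" "v \<in> U" "u \<noteq> v" for u v
  proof -
    have "r \<le> dist u v"
      using r(2)[of u] \<delta>(2)[of u v] that by auto
    then show ?thesis
      using dist_triangle[of u v "A v"] dist_commute[of v "A v"] A(2)[of u] A(2)[of v] by linarith
  qed
  then show ?thesis
    using A(1) by blast
qed

lemma exp_rational_approx:
  fixes y e :: real
  assumes "0 < y" "0 < e"
  shows "\<exists>g\<in>\<rat>. \<bar>exp g - y\<bar> < e"
proof -
  obtain g where "g \<in> \<rat>" "ln y < g" "g < ln (y + e)"
    using Rats_dense_in_real[of "ln y" "ln (y + e)"] assms by auto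
  moreover have "y < exp g"
    using assms \<open>ln y < g\<close> by (metis exp_less_cancel_iff exp_ln)
  moreover have "exp g < y + e"
    using assms \<open>g < ln (y + e)\<close> by (metis add_pos_pos exp_less_cancel_iff exp_ln)
  ultimately show ?thesis
    by force
qed

lemma relative_error_le:
  fixes e w R :: real
  assumes "0 < e" "0 < w" "\<bar>w - R\<bar> \<le> e * w / (1 + e)"
  shows "\<bar>(w - R) / min w R\<bar> \<le> e"
proof -
  have pos: "0 < w / (1 + e)"
    using assms by simp
  have "w / (1 + e) = w - e * w / (1 + e)" "0 \<le> e * w / (1 + e)"
    using assms(1,2) by (simp_all add: field_simps)
  then have low: "w / (1 + e) \<le> min w R"
    using assms(3) by (simp add: abs_le_iff)
  have "\<bar>(w - R) / min w R\<bar> = \<bar>w - R\<bar> / min w R"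
    using pos low by simp
  also have "\<dots> \<le> (e * w / (1 + e)) / (w / (1 + e))"
    using assms(3) pos low by (intro frac_le) auto
  also have "\<dots> = e"
    using assms(1,2) by simp
  finally show ?thesis .
qed

definition ln_vec :: "real^'n \<Rightarrow> real^'n" where
  "ln_vec x = (\<chi> j. ln (x $ j))"

lemma ln_vec_inj:
  assumes "pos_vec x" "pos_vec y" "ln_vec x = ln_vec y"
  shows "x = y"
  using assms by (simp add: pos_vec_def ln_vec_def vec_eq_iff)

lemma monom_eval_ln_vec:
  assumes "pos_vec x"
  shows "monom_eval c \<alpha> x = c * exp (\<alpha> \<bullet> ln_vec x)"
proof -
  have "(x $ j) powr (\<alpha> $ j) = exp (\<alpha> $ j * ln (x $ j))" for j
    using assms by (simp add: pos_vec_def powr_def mult.commute less_imp_neq[symmetric])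
  then show ?thesis
    by (simp add: monom_eval_def ln_vec_def inner_vec_def exp_sum)
qed

lemma posy_eval_nonneg: "is_posy_rep ps \<Longrightarrow> 0 \<le> posy_eval ps x"
  unfolding posy_eval_def is_posy_rep_def
  by (intro sum_list_nonneg) (fastforce simp: monom_eval_def intro!: prod_nonneg mult_nonneg_nonneg)

lemma gpos_eval_one:
  assumes "pos_vec x" "is_posy_rep ps"
  shows "gpos_eval 1 ps x = posy_eval ps x"
proof -
  have "(\<chi> j. (x $ j) powr (1 / 1)) = x"
    using assms(1) by (simp add: pos_vec_def vec_eq_iff less_imp_le)
  then show ?thesis
    using posy_eval_nonneg[OF assms(2)] by (simp add: gpos_eval_def)
qed

definition gaussian_posy ::
    "real \<Rightarrow> ('i \<Rightarrow> real^'n) \<Rightarrow> ('i \<Rightarrow> real) \<Rightarrow> 'i list \<Rightarrow> (real \<times> (real^'n)) list" where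
  "gaussian_posy t a c qs = map (\<lambda>q. (c q * exp (- t * (a q \<bullet> a q)), (2 * t) *\<^sub>R a q)) qs"

lemma posy_eval_gaussian_posy:
  assumes "pos_vec x" "distinct qs"
  shows "posy_eval (gaussian_posy t a c qs) x =
    exp (t * (norm (ln_vec x))\<^sup>2) * (\<Sum>q\<in>set qs. c q * exp (- t * (dist (ln_vec x) (a q))\<^sup>2))"
proof -
  have "monom_eval (c q * exp (- t * (a q \<bullet> a q))) ((2 * t) *\<^sub>R a q) x =
      exp (t * (norm (ln_vec x))\<^sup>2) * (c q * exp (- t * (dist (ln_vec x) (a q))\<^sup>2))" for q
  proof -
    have "- t * (a q \<bullet> a q) + (2 * t) *\<^sub>R a q \<bullet> ln_vec x =
        t * (norm (ln_vec x))\<^sup>2 + - t * (dist (ln_vec x) (a q))\<^sup>2"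
      by (simp add: dist_norm power2_norm_eq_inner inner_commute algebra_simps)
    then have "exp (- t * (a q \<bullet> a q)) * exp ((2 * t) *\<^sub>R a q \<bullet> ln_vec x) =
        exp (t * (norm (ln_vec x))\<^sup>2) * exp (- t * (dist (ln_vec x) (a q))\<^sup>2)"
      by (simp only: exp_add[symmetric])
    then show ?thesis
      by (simp only: monom_eval_ln_vec[OF assms(1)] mult_ac)
  qed
  then show ?thesis
    using assms(2)
    by (simp add: posy_eval_def gaussian_posy_def sum_list_distinct_conv_sum_set sum_distrib_left)
qed

lemma rational_gpos_rep_gaussian_posy:
  assumes "qs \<noteq> []" "t \<in> \<rat>"
    and "\<And>q j. q \<in> set qs \<Longrightarrow> a q $ j \<in> \<rat>"
    and "\<And>q. q \<in> set qs \<Longrightarrow> 0 < c q \<and> ln (c q) \<in> \<rat>"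
  shows "rational_gpos_rep 1 (gaussian_posy t a c qs)"
proof -
  have "a q \<bullet> a q \<in> \<rat>" if "q \<in> set qs" for q
    unfolding inner_vec_def using assms(3) that by (auto intro!: Rats_mult)
  then show ?thesis
    using assms by (auto simp: rational_gpos_rep_def is_posy_rep_def gaussian_posy_def ln_mult)
qed

lemma gaussian_posy_ratio_tendsto:
  assumes "pos_vec x" "distinct qs" "p \<in> set qs"
    and "\<And>q. q \<in> set qs \<Longrightarrow> c q \<noteq> c p \<Longrightarrow> dist (ln_vec x) (a p) < dist (ln_vec x) (a q)"
  shows "((\<lambda>t. posy_eval (gaussian_posy t a c qs) x / posy_eval (gaussian_posy t a (\<lambda>_. 1) qs) x)
    \<longlongrightarrow> c p) at_top"
proof -
  have "(dist (ln_vec x) (a p))\<^sup>2 < (dist (ln_vec x) (a q))\<^sup>2"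
    if "q \<in> set qs" "c q \<noteq> c p" for q
    using assms(4)[OF that] by (intro power_strict_mono) auto
  then have "((\<lambda>t. (\<Sum>q\<in>set qs. c q * exp (- t * (dist (ln_vec x) (a q))\<^sup>2)) /
      (\<Sum>q\<in>set qs. exp (- t * (dist (ln_vec x) (a q))\<^sup>2))) \<longlongrightarrow> c p) at_top"
    using assms(3) by (intro softmin_average_tendsto) auto
  then show ?thesis
    by (simp add: posy_eval_gaussian_posy[OF assms(1,2)])
qed

lemma posy_ratio_abs_approx:
  fixes x :: "'i \<Rightarrow> real^'n" and c e :: "'i \<Rightarrow> real"
  assumes "distinct qs" "qs \<noteq> []"
    and "\<And>q. q \<in> set qs \<Longrightarrow> pos_vec (x q)"
    and "\<And>q. q \<in> set qs \<Longrightarrow> 0 < c q \<and> ln (c q) \<in> \<rat>"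
    and "\<And>q. q \<in> set qs \<Longrightarrow> 0 < e q"
    and "\<And>p q. p \<in> set qs \<Longrightarrow> q \<in> set qs \<Longrightarrow> x p = x q \<Longrightarrow> c p = c q"
  shows "\<exists>ps ps'. rational_gpos_rep 1 ps \<and> rational_gpos_rep 1 ps' \<and>
    (\<forall>p\<in>set qs. \<bar>posy_eval ps (x p) / posy_eval ps' (x p) - c p\<bar> < e p)"
proof -
  obtain A where A_rat: "\<And>u j. A u $ j \<in> \<rat>"
    and A_sep: "\<And>p q. p \<in> set qs \<Longrightarrow> q \<in> set qs \<Longrightarrow> ln_vec (x p) \<noteq> ln_vec (x q) \<Longrightarrow>
      dist (ln_vec (x p)) (A (ln_vec (x p))) < dist (ln_vec (x p)) (A (ln_vec (x q)))"
    using rational_separating_approx[of "(\<lambda>q. ln_vec (x q)) ` set qs"] by blast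
  define a where "a q = A (ln_vec (x q))" for q
  define R where "R t p = posy_eval (gaussian_posy t a c qs) (x p) /
    posy_eval (gaussian_posy t a (\<lambda>_. 1) qs) (x p)" for t p
  have lim: "((\<lambda>t. R t p) \<longlongrightarrow> c p) at_top" if "p \<in> set qs" for p
    unfolding R_def
  proof (rule gaussian_posy_ratio_tendsto)
    fix q assume "q \<in> set qs" "c q \<noteq> c p"
    then have "ln_vec (x p) \<noteq> ln_vec (x q)"
      using assms(3,6) that ln_vec_inj by metis
    then show "dist (ln_vec (x p)) (a p) < dist (ln_vec (x p)) (a q)"
      using A_sep \<open>q \<in> set qs\<close> that by (simp add: a_def)
  qed (use assms(1,3) that in auto)
  have "\<forall>\<^sub>F t in at_top. \<bar>R t p - c p\<bar> < e p" if "p \<in> set qs" for p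
    using tendstoD[OF lim[OF that] assms(5)[OF that]] by (simp add: dist_real_def)
  then have "\<forall>\<^sub>F t in at_top. \<forall>p\<in>set qs. \<bar>R t p - c p\<bar> < e p"
    by (simp add: eventually_ball_finite)
  then obtain t0 where t0: "\<And>t. t0 \<le> t \<Longrightarrow> \<forall>p\<in>set qs. \<bar>R t p - c p\<bar> < e p"
    by (auto simp: eventually_at_top_linorder)
  obtain N :: nat where "t0 \<le> real N"
    using real_arch_simple by blast
  moreover have "rational_gpos_rep 1 (gaussian_posy (real N) a c qs)"
    "rational_gpos_rep 1 (gaussian_posy (real N) a (\<lambda>_. 1) qs)"
    using assms(2,4) A_rat by (auto intro!: rational_gpos_rep_gaussian_posy simp: a_def)
  ultimately show ?thesis
    using t0 unfolding R_def by blast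
qed

lemma posy_ratio_rel_approx:
  fixes x :: "'i \<Rightarrow> real^'n" and y :: "'i \<Rightarrow> real"
  assumes "distinct qs" "qs \<noteq> []" "0 < \<epsilon>"
    and "\<And>q. q \<in> set qs \<Longrightarrow> pos_vec (x q) \<and> 0 < y q"
    and "\<And>p q. p \<in> set qs \<Longrightarrow> q \<in> set qs \<Longrightarrow> x p = x q \<Longrightarrow> y p = y q"
  shows "\<exists>ps ps'. rational_gpos_rep 1 ps \<and> rational_gpos_rep 1 ps' \<and>
    (\<forall>p\<in>set qs. \<bar>(y p - posy_eval ps (x p) / posy_eval ps' (x p))
      / min (y p) (posy_eval ps (x p) / posy_eval ps' (x p))\<bar> \<le> \<epsilon>)"
proof -
  define \<eta> where "\<eta> v = \<epsilon> * v / (1 + \<epsilon>)" for v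
  have "\<exists>g\<in>\<rat>. \<bar>exp g - v\<bar> < \<eta> v / 2" if "0 < v" for v
    using exp_rational_approx[OF that] assms(3) that by (simp add: \<eta>_def)
  then obtain g where g: "\<And>v. 0 < v \<Longrightarrow> g v \<in> \<rat> \<and> \<bar>exp (g v) - v\<bar> < \<eta> v / 2"
    by metis
  define c where "c q = exp (g (y q))" for q
  have "\<exists>ps ps'. rational_gpos_rep 1 ps \<and> rational_gpos_rep 1 ps' \<and>
      (\<forall>p\<in>set qs. \<bar>posy_eval ps (x p) / posy_eval ps' (x p) - c p\<bar> < \<eta> (y p) / 2)"
  proof (rule posy_ratio_abs_approx)
    show "0 < c q \<and> ln (c q) \<in> \<rat>" "0 < \<eta> (y q) / 2" if "q \<in> set qs" for q
      using g assms(3,4) that by (simp_all add: c_def \<eta>_def)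
    show "c p = c q" if "p \<in> set qs" "q \<in> set qs" "x p = x q" for p q
      using assms(5)[OF that] by (simp add: c_def)
  qed (use assms(1,2,4) in auto)
  then obtain ps ps' where ps: "rational_gpos_rep 1 ps" "rational_gpos_rep 1 ps'"
    and approx: "\<And>p. p \<in> set qs \<Longrightarrow> \<bar>posy_eval ps (x p) / posy_eval ps' (x p) - c p\<bar> < \<eta> (y p) / 2"
    by blast
  have "\<bar>(y p - posy_eval ps (x p) / posy_eval ps' (x p))
      / min (y p) (posy_eval ps (x p) / posy_eval ps' (x p))\<bar> \<le> \<epsilon>" if "p \<in> set qs" for p
  proof (rule relative_error_le)
    have "\<bar>c p - y p\<bar> < \<eta> (y p) / 2"
      using g assms(4) that by (simp add: c_def)
    with approx[OF that] have "\<bar>y p - posy_eval ps (x p) / posy_eval ps' (x p)\<bar> \<le> \<eta> (y p)"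
      by linarith
    then show "\<bar>y p - posy_eval ps (x p) / posy_eval ps' (x p)\<bar> \<le> \<epsilon> * y p / (1 + \<epsilon>)"
      by (simp add: \<eta>_def)
  qed (use assms(3,4) that in auto)
  with ps show ?thesis
    by blast
qed

theorem proposition1:
  fixes z :: "nat \<Rightarrow> real^'n" and w :: "nat \<Rightarrow> real" and m :: nat and \<epsilon> :: real
  assumes z_pos: "\<forall>i\<in>{1..m}. pos_vec (z i)"
    and w_pos: "\<forall>i\<in>{1..m}. w i > 0"
    and ell: "\<exists>L :: real^'n \<Rightarrow> real. (\<forall>x. pos_vec x \<longrightarrow> L x > 0) \<and> (\<forall>i\<in>{1..m}. w i = L (z i))"
    and eps: "\<epsilon> > 0"
  shows "\<exists>T ps ps'. T \<in> \<rat> \<and> T > 0 \<and> rational_gpos_rep T ps \<and> rational_gpos_rep T ps' \<and>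
    (\<forall>i\<in>{1..m}.
       \<bar>(w i - gpos_eval T ps (z i) / gpos_eval T ps' (z i))
          / min (w i) (gpos_eval T ps (z i) / gpos_eval T ps' (z i))\<bar> \<le> \<epsilon>)"
proof (cases "m = 0")
  case True
  have "rational_gpos_rep 1 [(1, 0 :: real^'n)]"
    by (simp add: rational_gpos_rep_def is_posy_rep_def)
  with True show ?thesis
    by (intro exI[of _ 1]) auto
next
  case False
  have qs: "distinct [1..<Suc m]" "[1..<Suc m] \<noteq> []" "set [1..<Suc m] = {1..m}"
    using False by auto
  obtain L where "\<forall>i\<in>{1..m}. w i = L (z i)"
    using ell by blast
  then obtain ps ps' where ps: "rational_gpos_rep 1 ps" "rational_gpos_rep 1 ps'"
    and approx: "\<forall>i\<in>{1..m}. \<bar>(w i - posy_eval ps (z i) / posy_eval ps' (z i))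
      / min (w i) (posy_eval ps (z i) / posy_eval ps' (z i))\<bar> \<le> \<epsilon>"
    using posy_ratio_rel_approx[OF qs(1,2) eps, of z w] z_pos w_pos unfolding qs(3) by metis
  have "gpos_eval 1 ps (z i) = posy_eval ps (z i)" "gpos_eval 1 ps' (z i) = posy_eval ps' (z i)"
    if "i \<in> {1..m}" for i
    using ps z_pos that by (simp_all add: gpos_eval_one rational_gpos_rep_def)
  with ps approx show ?thesis
    by (intro exI[of _ 1] exI[of _ ps] exI[of _ ps']) simp
qed

end
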